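(* Let $N\ge2$, $a\in\mathbb C$, and let $\boldsymbol\theta_0=(\theta_0^{(1)},\dots,\theta_0^{(N)})$, $\boldsymbol\theta_\infty=(\theta_\infty^{(1)},\dots,\theta_\infty^{(N)})\in\mathbb C^N$ have zero sum of components, with the $\theta_\infty^{(k)}$ pairwise distinct and no difference $\theta_\infty^{(k)}-\theta_\infty^{(l)}$ a nonzero integer. Let $r_1,\dots,r_N\in\mathbb C^\times$, $\Theta_\infty=\operatorname{diag}\boldsymbol\theta_\infty$, and define $A_1$ by $$(A_1)_{jm}=-\frac{r_j}{r_m}\cdot\frac{\prod_{k}(\theta_\infty^{(j)}-a/N+\theta_0^{(k)})}{\prod_{k\ne m}(\theta_\infty^{(m)}-\theta_\infty^{(k)})}-\delta_{jm}\frac aN,$$ and $A_0=-A_1-\Theta_\infty$. Then the solution of $$\frac{d\Phi(y)}{dy}=\Phi(y)\left(\frac{A_0}{y}+\frac{A_1}{y-1}\right)$$ with asymptotics $\Phi(y)=y^{-\Theta_\infty}(\mathbb I+O(y^{-1}))$ as $y\to\infty$ is given, for $j,m=1,\dots,N$, by $$\Phi_{jm}(y)=N_{jm}\,y^{-\theta_\infty^{(j)}-1+\delta_{jm}}\left(1-\tfrac1y\right)^{-a/N}{}_NF_{N-1}\left(\begin{matrix}\{1-\delta_{jm}-a/N+\theta_0^{(k)}+\theta_\infty^{(j)}\}_{k=1,\dots,N}\\ \{1+\theta_\infty^{(j)}-\theta_\infty^{(k)}+\delta_{mk}-\delta_{jm}\}_{k=1,\dots,N;\,k\ne j}\end{matrix}\;\Bigg|\;\frac1y\right),$$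 where $N_{jm}=\dfrac{(A_1)_{jm}}{\theta_\infty^{(m)}-\theta_\infty^{(j)}-1}$ for $j\ne m$ and $N_{jj}=1$.
   Context: ${}_NF_{N-1}$ denotes the generalized (Clausen–Thomae) hypergeometric function with the $N$ upper parameters listed in the top row and the $N-1$ lower parameters listed in the bottom row. In this setting $A_1$ is conjugate to $a\operatorname{diag}(\tfrac{N-1}N,-\tfrac1N,\dots,-\tfrac1N)$ and $A_0$ to $\operatorname{diag}\boldsymbol\theta_0$. *)

theory Defs
  imports "HOL-Analysis.Analysis"
begin

definition kdelta :: "nat \<Rightarrow> nat \<Rightarrow> complex" where
  "kdelta j m = (if j = m then 1 else 0)"

text \<open>Generalized (Clausen--Thomae) hypergeometric function pFq with upper
  parameters given by the list as and lower parameters by the list bs,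
  defined by its power series (convergent for norm z < 1 when length as = length bs + 1).\<close>
definition hyp_pFq :: "complex list \<Rightarrow> complex list \<Rightarrow> complex \<Rightarrow> complex" where
  "hyp_pFq as bs z =
     (\<Sum>n. (\<Prod>a\<leftarrow>as. pochhammer a n) / (\<Prod>b\<leftarrow>bs. pochhammer b n) * z ^ n / of_nat (fact n))"

text \<open>The matrix A_1 (indices 0..N-1).\<close>
definition matA1 :: "nat \<Rightarrow> complex \<Rightarrow> (nat \<Rightarrow> complex) \<Rightarrow> (nat \<Rightarrow> complex) \<Rightarrow> (nat \<Rightarrow> complex)
                      \<Rightarrow> nat \<Rightarrow> nat \<Rightarrow> complex" where
  "matA1 N a th0 thi r j m =
     - (r j / r m) * (\<Prod>k<N. thi j - a / of_nat N + th0 k)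
         / (\<Prod>k\<in>{..<N} - {m}. thi m - thi k)
     - kdelta j m * a / of_nat N"

definition matA0 :: "nat \<Rightarrow> complex \<Rightarrow> (nat \<Rightarrow> complex) \<Rightarrow> (nat \<Rightarrow> complex) \<Rightarrow> (nat \<Rightarrow> complex)
                      \<Rightarrow> nat \<Rightarrow> nat \<Rightarrow> complex" where
  "matA0 N a th0 thi r j m = - matA1 N a th0 thi r j m - kdelta j m * thi j"

definition normc :: "nat \<Rightarrow> complex \<Rightarrow> (nat \<Rightarrow> complex) \<Rightarrow> (nat \<Rightarrow> complex) \<Rightarrow> (nat \<Rightarrow> complex)
                      \<Rightarrow> nat \<Rightarrow> nat \<Rightarrow> complex" where
  "normc N a th0 thi r j m =
     (if j = m then 1 else matA1 N a th0 thi r j m / (thi m - thi j - 1))"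

text \<open>The explicit solution Phi_jm(y) (principal branches of the powers).\<close>
definition PhiSol :: "nat \<Rightarrow> complex \<Rightarrow> (nat \<Rightarrow> complex) \<Rightarrow> (nat \<Rightarrow> complex) \<Rightarrow> (nat \<Rightarrow> complex)
                      \<Rightarrow> complex \<Rightarrow> nat \<Rightarrow> nat \<Rightarrow> complex" where
  "PhiSol N a th0 thi r y j m =
     normc N a th0 thi r j m * y powr (- thi j - 1 + kdelta j m)
       * (1 - 1 / y) powr (- a / of_nat N)
       * hyp_pFq (map (\<lambda>k. 1 - kdelta j m - a / of_nat N + th0 k + thi j) [0..<N])
                 (map (\<lambda>k. 1 + thi j - thi k + kdelta m k - kdelta j m)
                      (filter (\<lambda>k. k \<noteq> j) [0..<N]))
                 (1 / y)"

definition solDom :: "complex set" where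
  "solDom = {y. 1 < norm y \<and> y \<notin> {t. t \<in> \<real> \<and> Re t \<le> 0}}"

end

theory Submission
  imports Defs "HOL-Computational_Algebra.Polynomial"
begin

text \<open>Fix the row j and put x = 1/y. Since A_1 = - u v^T - (a/N) I is a rank-one
  perturbation of a scalar matrix, the substitution
  Phi_jm(y) = y^(-theta_j) (1 - x)^(-a/N) h_m(x) turns the row j of the system into
  (1 - x) (x h_m' + d_m h_m) = x v_m (sum_k u_k h_k),  with d_m = theta_j - theta_m.
  Its power series solution with h_m(0) = delta_jm has the coefficients
  (n + d_m) h_m[n] = (v_m / v_j) n c_n for n > 0, where the c_n are the coefficients of the
  diagonal series h_j, a generalized hypergeometric series with upper parameters
  b_l = theta_j - a/N + theta_0^(l). Substituted into the differential equation, this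
  ansatz reduces to the partial fraction expansion of
  prod_l (b_l + n) / prod_l (d_l + n), i.e. to Lagrange interpolation of the monic
  polynomial prod_l (b_l + x) at the nodes -d_k. The asymptotics at infinity follow from
  h_m(0) = delta_jm.\<close>

section \<open>Lagrange interpolation of a monic product\<close>

lemma prod_plus_lagrange_interpolation:
  fixes b d :: "nat \<Rightarrow> 'a :: field"
  assumes inj: "inj_on d {..<N}"
  shows "(\<Prod>l<N. b l + x) = (\<Prod>l<N. d l + x) +
     (\<Sum>k<N. (\<Prod>l<N. b l - d k) / (\<Prod>l\<in>{..<N}-{k}. d l - d k) * (\<Prod>l\<in>{..<N}-{k}. d l + x))"
proof (cases "N = 0")
  case False
  define w where "w k = (\<Prod>l<N. b l - d k) / (\<Prod>l\<in>{..<N}-{k}. d l - d k)" for k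
  define p where "p = (\<Prod>l<N. [:b l, 1:]) - (\<Prod>l<N. [:d l, 1:])
      - (\<Sum>k<N. smult (w k) (\<Prod>l\<in>{..<N}-{k}. [:d l, 1:]))"
  have deg_monic: "degree (\<Prod>l\<in>A. [:c l, 1:]) = card A" if "finite A" for A and c :: "nat \<Rightarrow> 'a"
    using that by (subst degree_prod_eq_sum_degree) auto
  have lead_monic: "coeff (\<Prod>l<N. [:c l, 1:]) N = 1" for c :: "nat \<Rightarrow> 'a"
    using lead_coeff_prod[of "\<lambda>l. [:c l, 1:]" "{..<N}"] deg_monic[of "{..<N}" c] by simp
  have "degree ((\<Prod>l<N. [:b l, 1:]) - (\<Prod>l<N. [:d l, 1:])) \<le> N - 1"
  proof (rule degree_le, intro allI impI)
    fix i assume "N - 1 < i"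
    then consider "i = N" | "i > N" using False by linarith
    then show "coeff ((\<Prod>l<N. [:b l, 1:]) - (\<Prod>l<N. [:d l, 1:])) i = 0"
      by cases (simp_all add: lead_monic coeff_eq_0 deg_monic)
  qed
  moreover have "degree (\<Sum>k<N. smult (w k) (\<Prod>l\<in>{..<N}-{k}. [:d l, 1:])) \<le> N - 1"
    by (intro degree_sum_le order_trans[OF degree_smult_le]) (auto simp: deg_monic)
  ultimately have deg_p: "degree p \<le> N - 1"
    unfolding p_def by (rule degree_diff_le)
  have root: "poly p (- d k) = 0" if k: "k < N" for k
  proof -
    have "(\<Sum>k'<N. w k' * (\<Prod>l\<in>{..<N}-{k'}. d l - d k))
        = w k * (\<Prod>l\<in>{..<N}-{k}. d l - d k)"
      using k by (subst sum.remove[of _ k]) (auto intro!: sum.neutral prod_zero)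
    also have "\<dots> = (\<Prod>l<N. b l - d k)"
      using inj k by (auto simp: w_def inj_on_def)
    moreover have "(\<Prod>l<N. d l - d k) = 0"
      using k by (intro prod_zero) auto
    ultimately show ?thesis
      by (simp add: p_def poly_sum poly_prod)
  qed
  have "p = 0"
  proof (rule ccontr)
    assume "p \<noteq> 0"
    have "N = card ((\<lambda>k. - d k) ` {..<N})"
      using inj by (subst card_image) (auto simp: inj_on_def)
    also have "\<dots> \<le> card {x. poly p x = 0}"
      using root poly_roots_finite[OF \<open>p \<noteq> 0\<close>] by (intro card_mono) auto
    also have "\<dots> \<le> degree p" by (rule card_poly_roots_bound[OF \<open>p \<noteq> 0\<close>])
    finally show False using deg_p False by linarith
  qed
  then have "poly p x = 0" by simp
  then show ?thesis
    by (simp add: p_def poly_sum poly_prod w_def algebra_simps)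
qed simp

section \<open>Convergence of the hypergeometric series\<close>

definition pFq_coeff :: "complex list \<Rightarrow> complex list \<Rightarrow> nat \<Rightarrow> complex" where
  "pFq_coeff as bs n = (\<Prod>a\<leftarrow>as. pochhammer a n) / (\<Prod>b\<leftarrow>bs. pochhammer b n) / fact n"

lemma hyp_pFq_eq_eval_fps: "hyp_pFq as bs z = eval_fps (Abs_fps (pFq_coeff as bs)) z"
  unfolding hyp_pFq_def eval_fps_def pFq_coeff_def by simp

lemma prod_list_map_distinct: "distinct xs \<Longrightarrow> (\<Prod>x\<leftarrow>map f xs. g x) = (\<Prod>k\<in>set xs. g (f k))"
  by (simp add: prod.distinct_set_conv_list map_map o_def)

lemma conv_radius_ge_1_ratio:
  fixes c q :: "nat \<Rightarrow> 'a :: {banach, real_normed_div_algebra}"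
  assumes rec: "\<And>n. c (Suc n) = c n * q n" and lim: "(\<lambda>n. norm (q n)) \<longlonglongrightarrow> 1"
  shows "conv_radius c \<ge> 1"
proof (rule conv_radius_geI_ex')
  fix r :: real assume r: "0 < r" "ereal r < 1"
  then have "r < 1" by simp
  define K where "K = (1 + r) / (2 * r)"
  have "K > 1" using r \<open>r < 1\<close> by (simp add: K_def field_simps)
  then obtain M where M: "\<And>n. n \<ge> M \<Longrightarrow> norm (q n) < K"
    using order_tendstoD(2)[OF lim] by (auto simp: eventually_sequentially)
  show "summable (\<lambda>n. c n * of_real r ^ n)"
  proof (rule summable_ratio_test[of "(1 + r) / 2" M])
    fix n assume n: "n \<ge> M"
    have "norm (c (Suc n) * of_real r ^ Suc n) = norm (q n) * r * norm (c n * of_real r ^ n)"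
      using r by (simp add: rec norm_mult norm_power mult_ac)
    also have "\<dots> \<le> K * r * norm (c n * of_real r ^ n)"
      using M[OF n] r by (intro mult_right_mono) auto
    also have "K * r = (1 + r) / 2" using r by (simp add: K_def field_simps)
    finally show "norm (c (Suc n) * of_real r ^ Suc n) \<le> (1 + r) / 2 * norm (c n * of_real r ^ n)" .
  qed (use \<open>r < 1\<close> in simp)
qed

lemma shifted_ratio_tendsto_1: "(\<lambda>n. (z + of_nat n) / (of_nat n + 1 :: complex)) \<longlonglongrightarrow> 1"
proof -
  have "(\<lambda>n. 1 + (z - 1) / of_nat (Suc n) :: complex) \<longlonglongrightarrow> 1 + 0"
    by (intro tendsto_intros LIMSEQ_Suc[OF lim_const_over_n])
  moreover have "(z + of_nat n) / (of_nat n + 1) = 1 + (z - 1) / of_nat (Suc n)" for n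
    using of_nat_neq_0[of n, where 'a=complex] by (simp add: field_simps)
  ultimately show ?thesis by simp
qed

lemma fps_conv_radius_pFq_coeff:
  assumes "length as = Suc (length bs)"
  shows "fps_conv_radius (Abs_fps (pFq_coeff as bs)) \<ge> 1"
proof -
  have list_prod: "(\<Prod>x\<leftarrow>xs. f x) = (\<Prod>i<length xs. f (xs ! i))" for xs f
    by (simp add: prod.list_conv_set_nth atLeast0LessThan)
  define q where "q n = (\<Prod>i<length as. (as ! i + of_nat n) / (of_nat n + 1)) /
       (\<Prod>i<length bs. (bs ! i + of_nat n) / (of_nat n + 1))" for n
  have rec: "pFq_coeff as bs (Suc n) = pFq_coeff as bs n * q n" for n
  proof -
    define A where "A = (\<Prod>i<length as. as ! i + of_nat n)"
    define B where "B = (\<Prod>i<length bs. bs ! i + of_nat n)"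
    have "(of_nat n + 1 :: complex) \<noteq> 0"
      using of_nat_neq_0[of n] by (simp add: add.commute)
    have "q n = (A / (of_nat n + 1) ^ length as) / (B / (of_nat n + 1) ^ length bs)"
      by (simp add: q_def A_def B_def prod_dividef)
    also have "\<dots> = A / B / (of_nat n + 1)"
    proof -
      have "X / p ^ Suc k / (Y / p ^ k) = X / Y / p" if "p \<noteq> 0" for X Y p :: complex and k
        using that by (cases "Y = 0") (simp_all add: field_simps)
      then show ?thesis using assms \<open>of_nat n + 1 \<noteq> 0\<close> by simp
    qed
    finally have "q n = A / B / (of_nat n + 1)" .
    moreover have "pFq_coeff as bs (Suc n) = pFq_coeff as bs n * (A / B / (of_nat n + 1))"
      by (simp add: pFq_coeff_def list_prod pochhammer_Suc prod.distrib A_def B_def mult_ac add_ac)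
    ultimately show ?thesis by simp
  qed
  have "q \<longlonglongrightarrow> (\<Prod>i<length as. 1) / (\<Prod>i<length bs. 1)"
    unfolding q_def by (intro tendsto_intros shifted_ratio_tendsto_1) simp
  then have "(\<lambda>n. norm (q n)) \<longlonglongrightarrow> 1"
    using tendsto_norm by fastforce
  then show ?thesis
    unfolding fps_conv_radius_def fps_nth_Abs_fps by (rule conv_radius_ge_1_ratio[of _ q, OF rec])
qed

lemma norm_less_fps_conv_radius_add:
  "norm x < fps_conv_radius f \<Longrightarrow> norm x < fps_conv_radius g \<Longrightarrow> norm x < fps_conv_radius (f + g)"
  using fps_conv_radius_add[of f g] by (metis min_less_iff_conj order_less_le_trans)

lemma norm_less_fps_conv_radius_mult:
  "norm x < fps_conv_radius f \<Longrightarrow> norm x < fps_conv_radius g \<Longrightarrow> norm x < fps_conv_radius (f * g)"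
  using fps_conv_radius_mult[of f g] by (metis min_less_iff_conj order_less_le_trans)

lemma norm_less_fps_conv_radius_sum:
  fixes f :: "'b \<Rightarrow> 'a :: {banach, real_normed_div_algebra} fps"
  assumes "\<And>k. k \<in> A \<Longrightarrow> norm x < fps_conv_radius (f k)"
  shows "norm x < fps_conv_radius (\<Sum>k\<in>A. f k)"
  using assms by (induction A rule: infinite_finite_induct) (auto intro: norm_less_fps_conv_radius_add)

lemma eval_fps_sum:
  fixes f :: "'b \<Rightarrow> 'a :: {banach, real_normed_field} fps"
  assumes "\<And>k. k \<in> A \<Longrightarrow> norm x < fps_conv_radius (f k)"
  shows "eval_fps (\<Sum>k\<in>A. f k) x = (\<Sum>k\<in>A. eval_fps (f k) x)"
  using assms
proof (induction A rule: infinite_finite_induct)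
  case (insert k A)
  then show ?case by (simp add: eval_fps_add norm_less_fps_conv_radius_sum)
qed simp_all

lemma has_field_derivative_imp_difference_bound:
  assumes "(f has_field_derivative D) (at x)"
  obtains \<delta> where "\<delta> > 0"
    and "\<And>z. norm (z - x) < \<delta> \<Longrightarrow> norm (f z - f x) \<le> (norm D + 1) * norm (z - x)"
proof -
  have "((\<lambda>z. (f z - f x) / (z - x)) \<longlongrightarrow> D) (at x)"
    using assms by (simp add: has_field_derivative_iff)
  then have "eventually (\<lambda>z. dist ((f z - f x) / (z - x)) D < 1) (at x)"
    by (rule tendstoD) simp
  then obtain \<delta> where "\<delta> > 0"
    and close: "\<And>z. z \<noteq> x \<Longrightarrow> dist z x < \<delta> \<Longrightarrow> dist ((f z - f x) / (z - x)) D < 1"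
    unfolding eventually_at by blast
  have "norm (f z - f x) \<le> (norm D + 1) * norm (z - x)" if "norm (z - x) < \<delta>" for z
  proof (cases "z = x")
    case False
    have "norm ((f z - f x) / (z - x)) \<le> norm D + norm ((f z - f x) / (z - x) - D)"
      by (rule norm_triangle_sub)
    also have "\<dots> \<le> norm D + 1"
      using close[OF False] that by (simp add: dist_norm)
    finally show ?thesis
      using False by (simp add: norm_divide divide_le_eq)
  qed simp
  with \<open>\<delta> > 0\<close> show ?thesis by (rule that)
qed

definition matA1_u :: "nat \<Rightarrow> complex \<Rightarrow> (nat \<Rightarrow> complex) \<Rightarrow> (nat \<Rightarrow> complex) \<Rightarrow> (nat \<Rightarrow> complex)
                       \<Rightarrow> nat \<Rightarrow> complex" where
  "matA1_u N a th0 thi r k = r k * (\<Prod>l<N. thi k - a / of_nat N + th0 l)"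

definition matA1_v :: "nat \<Rightarrow> (nat \<Rightarrow> complex) \<Rightarrow> (nat \<Rightarrow> complex) \<Rightarrow> nat \<Rightarrow> complex" where
  "matA1_v N thi r m = 1 / (r m * (\<Prod>l\<in>{..<N}-{m}. thi m - thi l))"

lemma matA1_rank_one:
  "matA1 N a th0 thi r k m = - matA1_u N a th0 thi r k * matA1_v N thi r m - kdelta k m * a / of_nat N"
  by (simp add: matA1_def matA1_u_def matA1_v_def field_simps)

lemma sum_kdelta_left:
  assumes "m < N"
  shows "(\<Sum>k<N. kdelta k m * f k) = f m"
proof -
  have "(\<Sum>k<N. kdelta k m * f k) = (\<Sum>k<N. if k = m then f k else 0)"
    by (intro sum.cong) (simp_all add: kdelta_def)
  then show ?thesis using assms by simp
qed

lemma sum_mult_matA1: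
  assumes "m < N"
  shows "(\<Sum>k<N. G k * matA1 N a th0 thi r k m) =
    - matA1_v N thi r m * (\<Sum>k<N. matA1_u N a th0 thi r k * G k) - a / of_nat N * G m"
proof -
  have "(\<Sum>k<N. G k * matA1 N a th0 thi r k m) = (\<Sum>k<N. - matA1_v N thi r m * (matA1_u N a th0 thi r k * G k))
      - (\<Sum>k<N. kdelta k m * (a / of_nat N * G k))"
    by (simp add: matA1_rank_one sum_subtractf algebra_simps)
  then show ?thesis
    using sum_kdelta_left[OF assms, of "\<lambda>k. a / of_nat N * G k"] by (simp add: sum_distrib_left)
qed

lemma sum_mult_matA0_matA1:
  fixes G :: "nat \<Rightarrow> complex"
  assumes "y \<noteq> 0" "y \<noteq> 1" "m < N"
  shows "(\<Sum>k<N. G k * (matA0 N a th0 thi r k m / y + matA1 N a th0 thi r k m / (y - 1))) =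
    - thi m * G m / y + (\<Sum>k<N. G k * matA1 N a th0 thi r k m) / (y * (y - 1))"
proof -
  have "1 / (y - 1) = 1 / y + 1 / (y * (y - 1))"
    using assms by (simp add: field_simps)
  then have "G k * (matA0 N a th0 thi r k m / y + matA1 N a th0 thi r k m / (y - 1)) =
      G k * matA1 N a th0 thi r k m / (y * (y - 1)) - kdelta k m * (thi k * G k / y)" for k
    by (simp add: matA0_def divide_inverse algebra_simps)
  then show ?thesis
    using sum_kdelta_left[OF assms(3), of "\<lambda>k. thi k * G k / y"]
    by (simp add: sum_subtractf sum_divide_distrib)
qed

section \<open>The power series of a row\<close>

locale hypergeometric_row =
  fixes N :: nat and a :: complex and th0 thi r :: "nat \<Rightarrow> complex" and j :: nat
  assumes j_less: "j < N"
    and thi_distinct: "\<And>k l. k < N \<Longrightarrow> l < N \<Longrightarrow> k \<noteq> l \<Longrightarrow> thi k \<noteq> thi l"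
    and thi_diff_not_int: "\<And>k l n. k < N \<Longrightarrow> l < N \<Longrightarrow> n \<noteq> 0 \<Longrightarrow> thi k - thi l \<noteq> of_int n"
    and r_nonzero: "\<And>k. k < N \<Longrightarrow> r k \<noteq> 0"
begin

abbreviation u where "u \<equiv> matA1_u N a th0 thi r"
abbreviation v where "v \<equiv> matA1_v N thi r"

definition b :: "nat \<Rightarrow> complex" where "b l = thi j - a / of_nat N + th0 l"
definition d :: "nat \<Rightarrow> complex" where "d l = thi j - thi l"

definition upper :: "nat \<Rightarrow> complex list" where
  "upper m = map (\<lambda>k. 1 - kdelta j m - a / of_nat N + th0 k + thi j) [0..<N]"

definition lower :: "nat \<Rightarrow> complex list" where
  "lower m = map (\<lambda>k. 1 + thi j - thi k + kdelta m k - kdelta j m) (filter (\<lambda>k. k \<noteq> j) [0..<N])"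

definition diag_coeff :: "nat \<Rightarrow> complex" where
  "diag_coeff n = (\<Prod>l<N. pochhammer (b l) n) / (\<Prod>l\<in>{..<N}-{j}. pochhammer (d l) n) / fact n"

text \<open>The series h_m of PhiSol y j m = y^(-thi j) (1 - 1/y)^(-a/N) h_m(1/y).\<close>
definition row_series :: "nat \<Rightarrow> complex fps" where
  "row_series m = fps_const (normc N a th0 thi r j m) * (if m = j then 1 else fps_X)
     * Abs_fps (pFq_coeff (upper m) (lower m))"

lemma d_j [simp]: "d j = 0"
  by (simp add: d_def)

lemma d_plus_of_nat_nonzero:
  assumes "l < N" "l \<noteq> j"
  shows "d l + of_nat i \<noteq> 0"
proof
  assume "d l + of_nat i = 0"
  then have "thi j - thi l = of_int (- int i)"
    by (simp add: d_def eq_neg_iff_add_eq_0)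
  moreover have "thi j \<noteq> thi l"
    using thi_distinct[OF j_less assms(1)] assms(2) by simp
  ultimately show False
    using thi_diff_not_int[OF j_less assms(1), of "- int i"] by (cases "i = 0") auto
qed

lemma d_plus_pos_nonzero: "l < N \<Longrightarrow> n > 0 \<Longrightarrow> d l + of_nat n \<noteq> 0"
  using d_plus_of_nat_nonzero by (cases "l = j") auto

lemma pochhammer_d_nonzero:
  assumes "l < N" "l \<noteq> j"
  shows "pochhammer (d l + of_nat i) n \<noteq> 0"
proof
  assume "pochhammer (d l + of_nat i) n = 0"
  then obtain k where "d l + of_nat i = - of_nat k"
    by (auto simp: pochhammer_eq_0_iff)
  then have "d l + of_nat (i + k) = 0" by (simp add: add.assoc[symmetric])
  with d_plus_of_nat_nonzero[OF assms] show False by blast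
qed

lemma prod_d_nonzero: "(\<Prod>l\<in>{..<N}-{j}. d l) \<noteq> 0"
  using d_plus_of_nat_nonzero[of _ 0] by (simp add: prod_zero_iff)

lemma v_nonzero: "k < N \<Longrightarrow> v k \<noteq> 0"
  using r_nonzero thi_distinct by (simp add: matA1_v_def prod_zero_iff)

lemma divide_v_j: "w / v j = w * (r j * (\<Prod>l\<in>{..<N}-{j}. d l))"
  by (simp add: matA1_v_def d_def)

lemma u_j: "u j = r j * (\<Prod>l<N. b l)"
  by (simp add: matA1_u_def b_def)

lemma u_mult_v:
  assumes "k < N"
  shows "u k * v k = (\<Prod>l<N. b l - d k) / (\<Prod>l\<in>{..<N}-{k}. d l - d k)"
proof -
  have "(\<Prod>l<N. b l - d k) = (\<Prod>l<N. thi k - a / of_nat N + th0 l)"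
    by (intro prod.cong) (simp_all add: b_def d_def)
  moreover have "(\<Prod>l\<in>{..<N}-{k}. d l - d k) = (\<Prod>l\<in>{..<N}-{k}. thi k - thi l)"
    by (intro prod.cong) (simp_all add: d_def)
  ultimately show ?thesis
    using r_nonzero[OF assms] by (simp add: matA1_u_def matA1_v_def)
qed

lemma pFq_coeff_diag: "pFq_coeff (upper j) (lower j) n = diag_coeff n"
proof -
  have "(\<Prod>x\<leftarrow>upper j. pochhammer x n) = (\<Prod>l<N. pochhammer (b l) n)"
    unfolding upper_def
    by (subst prod_list_map_distinct) (auto simp: b_def kdelta_def atLeast0LessThan algebra_simps)
  moreover have "(\<Prod>x\<leftarrow>lower j. pochhammer x n) = (\<Prod>l\<in>{..<N}-{j}. pochhammer (d l) n)"
    unfolding lower_def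
    by (subst prod_list_map_distinct) (auto simp: d_def kdelta_def intro!: prod.cong)
  ultimately show ?thesis
    by (simp add: pFq_coeff_def diag_coeff_def)
qed

lemma pFq_coeff_offdiag:
  assumes "m \<noteq> j"
  shows "pFq_coeff (upper m) (lower m) n = (\<Prod>l<N. pochhammer (b l + 1) n) /
     (\<Prod>l\<in>{..<N}-{j}. pochhammer (d l + 1 + kdelta m l) n) / fact n"
proof -
  have "(\<Prod>x\<leftarrow>upper m. pochhammer x n) = (\<Prod>l<N. pochhammer (b l + 1) n)"
    unfolding upper_def using assms
    by (subst prod_list_map_distinct) (auto simp: b_def kdelta_def atLeast0LessThan algebra_simps)
  moreover have "(\<Prod>x\<leftarrow>lower m. pochhammer x n) =
      (\<Prod>l\<in>{..<N}-{j}. pochhammer (d l + 1 + kdelta m l) n)"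
    unfolding lower_def using assms
    by (subst prod_list_map_distinct) (auto simp: d_def kdelta_def algebra_simps intro!: prod.cong)
  ultimately show ?thesis
    by (simp add: pFq_coeff_def)
qed

lemma normc_offdiag: "m \<noteq> j \<Longrightarrow> normc N a th0 thi r j m = u j * v m / (d m + 1)"
  by (simp add: normc_def matA1_rank_one kdelta_def d_def minus_divide_right)

lemma row_series_nth_offdiag:
  assumes m: "m < N" "m \<noteq> j"
  shows "fps_nth (row_series m) (Suc k) =
    v m / v j * diag_coeff (Suc k) * of_nat (Suc k) / (d m + of_nat (Suc k))"
proof -
  define Bp where "Bp = (\<Prod>l<N. b l)"
  define B1 where "B1 = (\<Prod>l<N. pochhammer (b l + 1) k)"
  define Dp where "Dp = (\<Prod>l\<in>{..<N}-{j}. d l)"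
  define D1 where "D1 = (\<Prod>l\<in>{..<N}-{j}. pochhammer (d l + 1) k)"
  define Dm where "Dm = (\<Prod>l\<in>{..<N}-{j}. pochhammer (d l + 1 + kdelta m l) k)"
  define E where "E = d m + of_nat (Suc k)"
  have m': "m \<in> {..<N}-{j}" using m by simp
  text \<open>Only the factor l = m differs between D1 and Dm, and it is shifted by one.\<close>
  have shift: "(d m + 1) * Dm = D1 * E"
  proof -
    have "Dm = pochhammer (d m + 1 + 1) k * (\<Prod>l\<in>{..<N}-{j}-{m}. pochhammer (d l + 1) k)"
      unfolding Dm_def by (subst prod.remove[OF _ m']) (auto simp: kdelta_def intro!: prod.cong)
    moreover have "D1 = pochhammer (d m + 1) k * (\<Prod>l\<in>{..<N}-{j}-{m}. pochhammer (d l + 1) k)"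
      unfolding D1_def by (subst prod.remove[OF _ m']) auto
    moreover have "(d m + 1) * pochhammer (d m + 1 + 1) k = pochhammer (d m + 1) k * E"
      using pochhammer_rec[of "d m + 1" k] pochhammer_rec'[of "d m + 1" k]
      by (simp add: E_def mult_ac add_ac)
    ultimately show ?thesis by (simp add: mult_ac)
  qed
  have nonzero: "E \<noteq> 0" "D1 \<noteq> 0" "Dp \<noteq> 0"
    using d_plus_of_nat_nonzero[OF m, of "Suc k"] pochhammer_d_nonzero[of _ 1] prod_d_nonzero
    by (simp_all add: E_def D1_def Dp_def prod_zero_iff)
  have lhs: "fps_nth (row_series m) (Suc k) = r j * Bp * v m * B1 / ((d m + 1) * Dm) / fact k"
    using m by (simp add: row_series_def normc_offdiag pFq_coeff_offdiag u_j Bp_def B1_def Dm_def mult.assoc)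
  have diag: "diag_coeff (Suc k) = Bp * B1 / (Dp * D1) / (fact k * of_nat (Suc k))"
    by (simp add: diag_coeff_def Bp_def B1_def Dp_def D1_def pochhammer_rec prod.distrib mult_ac)
  show ?thesis
    unfolding lhs diag divide_v_j E_def[symmetric] shift Dp_def[symmetric]
    using nonzero by (simp add: field_simps del: of_nat_Suc)
qed

lemma row_series_nth:
  assumes "m < N"
  shows "fps_nth (row_series m) n = (if m = j \<and> n = 0 then 1 else 0)
    + v m / v j * diag_coeff n * of_nat n / (d m + of_nat n)"
proof (cases "m = j")
  case True
  then show ?thesis
    using v_nonzero[OF j_less] by (cases n) (simp_all add: row_series_def normc_def pFq_coeff_diag diag_coeff_def)
next
  case False
  then show ?thesis
    using row_series_nth_offdiag[OF assms False] by (cases n) (simp_all add: row_series_def)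
qed

lemma row_series_nth_weighted:
  assumes "m < N"
  shows "(of_nat n + d m) * fps_nth (row_series m) n = v m / v j * diag_coeff n * of_nat n"
proof (cases "n = 0")
  case False
  then have "d m + of_nat n \<noteq> 0"
    using d_plus_pos_nonzero[OF assms] by simp
  then show ?thesis
    using False assms by (simp add: row_series_nth add.commute)
qed (use assms in \<open>simp add: row_series_nth\<close>)

lemma diag_coeff_Suc:
  "diag_coeff (Suc n) * (of_nat n + 1) =
     diag_coeff n * (\<Prod>l<N. b l + of_nat n) / (\<Prod>l\<in>{..<N}-{j}. d l + of_nat n)"
proof -
  have "P * A / (Q * B) / (F * p) * p = P / Q / F * A / B" if "p \<noteq> 0" for P A Q B F p :: complex
    using that by (cases "Q = 0"; cases "B = 0"; cases "F = 0") (simp_all add: field_simps)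
  moreover have "(of_nat n + 1 :: complex) \<noteq> 0"
    using of_nat_neq_0[of n] by (simp add: add.commute)
  ultimately show ?thesis
    unfolding diag_coeff_def pochhammer_Suc prod.distrib by (simp add: add.commute)
qed

text \<open>The partial fraction expansion behind the recursion of the coefficients.\<close>
lemma sum_u_mult_v_divide:
  assumes "n > 0"
  shows "(\<Sum>k<N. u k * v k / (d k + of_nat n)) =
     (\<Prod>l<N. b l + of_nat n) / (of_nat n * (\<Prod>l\<in>{..<N}-{j}. d l + of_nat n)) - 1"
proof -
  define x :: complex where "x = of_nat n"
  define Q where "Q = (\<Prod>l<N. d l + x)"
  have "Q \<noteq> 0"
    using d_plus_pos_nonzero assms by (simp add: Q_def x_def prod_zero_iff)
  have Q_remove: "Q = (d k + x) * (\<Prod>l\<in>{..<N}-{k}. d l + x)" if "k < N" for k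
    unfolding Q_def using that by (subst prod.remove[of _ k]) auto
  have "inj_on d {..<N}"
    using thi_distinct j_less by (auto simp: inj_on_def d_def)
  then have lagrange: "(\<Prod>l<N. b l + x) = Q + (\<Sum>k<N. u k * v k * (\<Prod>l\<in>{..<N}-{k}. d l + x))"
    unfolding Q_def using prod_plus_lagrange_interpolation[of d N b x] by (simp add: u_mult_v)
  have "(\<Sum>k<N. u k * v k / (d k + x)) = (\<Sum>k<N. u k * v k * (\<Prod>l\<in>{..<N}-{k}. d l + x)) / Q"
    unfolding sum_divide_distrib
  proof (intro sum.cong refl)
    fix k assume "k \<in> {..<N}"
    then have "d k + x \<noteq> 0" "(\<Prod>l\<in>{..<N}-{k}. d l + x) \<noteq> 0"
      using Q_remove[of k] \<open>Q \<noteq> 0\<close> by auto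
    then show "u k * v k / (d k + x) = u k * v k * (\<Prod>l\<in>{..<N}-{k}. d l + x) / Q"
      using Q_remove[of k] \<open>k \<in> {..<N}\<close> by simp
  qed
  also have "\<dots> = (\<Prod>l<N. b l + x) / Q - 1"
    unfolding lagrange using \<open>Q \<noteq> 0\<close> by (simp add: add_divide_distrib)
  finally show ?thesis
    using Q_remove[OF j_less] by (simp add: x_def)
qed

lemma row_series_recurrence:
  assumes m: "m < N"
  shows "(of_nat (Suc n) + d m) * fps_nth (row_series m) (Suc n) - (of_nat n + d m) * fps_nth (row_series m) n =
    v m * (\<Sum>k<N. u k * fps_nth (row_series k) n)"
proof (cases "n = 0")
  case True
  have "(\<Sum>k<N. u k * fps_nth (row_series k) 0) = (\<Sum>k<N. if k = j then u k else 0)"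
    by (intro sum.cong refl) (simp add: row_series_nth)
  then have "(\<Sum>k<N. u k * fps_nth (row_series k) 0) = u j"
    using j_less by simp
  moreover have "v m / v j * diag_coeff 1 = v m * u j"
    using prod_d_nonzero by (simp add: diag_coeff_def divide_v_j u_j)
  ultimately show ?thesis
    using True row_series_nth_weighted[OF m, of 1] row_series_nth_weighted[OF m, of 0] by simp
next
  case False
  then have "of_nat n \<noteq> (0 :: complex)" by simp
  have sum: "(\<Sum>k<N. u k * fps_nth (row_series k) n) =
      diag_coeff n * of_nat n / v j * (\<Sum>k<N. u k * v k / (d k + of_nat n))"
    unfolding sum_distrib_left using False by (intro sum.cong refl) (simp add: row_series_nth)
  have "(of_nat (Suc n) + d m) * fps_nth (row_series m) (Suc n) - (of_nat n + d m) * fps_nth (row_series m) n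
      = v m / v j * (diag_coeff (Suc n) * (of_nat n + 1) - diag_coeff n * of_nat n)"
    unfolding row_series_nth_weighted[OF m] by (simp add: algebra_simps add_divide_distrib)
  also have "\<dots> = v m / v j * (diag_coeff n * (\<Prod>l<N. b l + of_nat n) / (\<Prod>l\<in>{..<N}-{j}. d l + of_nat n)
      - diag_coeff n * of_nat n)"
    by (simp only: diag_coeff_Suc)
  also have "\<dots> = v m * (diag_coeff n * of_nat n / v j * ((\<Prod>l<N. b l + of_nat n) /
      (of_nat n * (\<Prod>l\<in>{..<N}-{j}. d l + of_nat n)) - 1))"
    using \<open>of_nat n \<noteq> 0\<close> by (simp add: field_simps)
  finally show ?thesis
    using sum_u_mult_v_divide[of n] False by (simp add: sum)
qed

lemma row_series_ode:
  assumes m: "m < N"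
  shows "(1 - fps_X) * (fps_X * fps_deriv (row_series m) + fps_const (d m) * row_series m) =
    fps_X * fps_const (v m) * (\<Sum>k<N. fps_const (u k) * row_series k)"
proof (rule fps_ext)
  fix n
  define L where "L = fps_X * fps_deriv (row_series m) + fps_const (d m) * row_series m"
  have L: "fps_nth L n = (of_nat n + d m) * fps_nth (row_series m) n" for n
    by (cases n) (simp_all add: L_def algebra_simps)
  show "fps_nth ((1 - fps_X) * L) n =
      fps_nth (fps_X * fps_const (v m) * (\<Sum>k<N. fps_const (u k) * row_series k)) n"
  proof (cases n)
    case 0
    then show ?thesis using m by (simp add: L row_series_nth)
  next
    case (Suc k)
    then show ?thesis
      using row_series_recurrence[OF m, of k] by (simp add: L algebra_simps mult.assoc fps_sum_nth)
  qed
qed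

lemma length_lower: "length (lower m) = N - 1"
proof -
  have "length (filter (\<lambda>k. k \<noteq> j) [0..<N]) = card ({..<N} - {j})"
    by (subst distinct_card[symmetric]) (auto intro: arg_cong[where f = card])
  then show ?thesis
    using j_less by (simp add: lower_def)
qed

lemma norm_less_fps_conv_radius_pFq:
  assumes "norm x < 1"
  shows "norm x < fps_conv_radius (Abs_fps (pFq_coeff (upper m) (lower m)))"
proof -
  have "fps_conv_radius (Abs_fps (pFq_coeff (upper m) (lower m))) \<ge> 1"
    using j_less by (intro fps_conv_radius_pFq_coeff) (simp add: upper_def length_lower)
  then show ?thesis
    using assms by (meson ereal_less(3) less_ereal.simps(1) order_less_le_trans)
qed

lemma norm_less_fps_conv_radius_row_series:
  "norm x < 1 \<Longrightarrow> norm x < fps_conv_radius (row_series m)"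
  unfolding row_series_def
  by (intro norm_less_fps_conv_radius_mult norm_less_fps_conv_radius_pFq) simp_all

lemma eval_row_series_ode:
  assumes m: "m < N" and x: "norm x < 1"
  shows "(1 - x) * (x * eval_fps (fps_deriv (row_series m)) x + d m * eval_fps (row_series m) x) =
    x * v m * (\<Sum>k<N. u k * eval_fps (row_series k) x)"
proof -
  have radius: "norm x < fps_conv_radius (row_series k)" for k
    using x by (rule norm_less_fps_conv_radius_row_series)
  then have radius_deriv: "norm x < fps_conv_radius (fps_deriv (row_series m))"
    using fps_conv_radius_deriv[of "row_series m"] order_less_le_trans by blast
  have radius_sum: "norm x < fps_conv_radius (\<Sum>k<N. fps_const (u k) * row_series k)"
    by (intro norm_less_fps_conv_radius_sum norm_less_fps_conv_radius_mult radius) simp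
  have "norm x < fps_conv_radius (1 - fps_X :: complex fps)"
    using fps_conv_radius_diff[of 1 "fps_X :: complex fps"] by simp
  then have "eval_fps ((1 - fps_X) * (fps_X * fps_deriv (row_series m) + fps_const (d m) * row_series m)) x =
      (1 - x) * (x * eval_fps (fps_deriv (row_series m)) x + d m * eval_fps (row_series m) x)"
    by (simp add: eval_fps_mult eval_fps_add eval_fps_diff radius radius_deriv norm_less_fps_conv_radius_mult
        norm_less_fps_conv_radius_add)
  moreover have "eval_fps (fps_X * fps_const (v m) * (\<Sum>k<N. fps_const (u k) * row_series k)) x =
      x * v m * (\<Sum>k<N. u k * eval_fps (row_series k) x)"
    by (simp add: eval_fps_mult eval_fps_sum radius radius_sum norm_less_fps_conv_radius_mult)
  ultimately show ?thesis
    by (simp only: row_series_ode[OF m])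
qed

end

context hypergeometric_row
begin

lemma PhiSol_eq_row_series:
  assumes "norm y > 1"
  shows "PhiSol N a th0 thi r y j m =
    y powr (- thi j) * (1 - 1 / y) powr (- a / of_nat N) * eval_fps (row_series m) (1 / y)"
proof -
  have "y \<noteq> 0" using assms by auto
  have x: "norm (1 / y) < 1" using assms by (simp add: norm_divide divide_less_eq)
  then have radius: "norm (1 / y) < fps_conv_radius (Abs_fps (pFq_coeff (upper m) (lower m)))"
    by (rule norm_less_fps_conv_radius_pFq)
  have "y powr (- thi j - 1 + kdelta j m) = y powr (- thi j) * (if m = j then 1 else 1 / y)"
    using \<open>y \<noteq> 0\<close> by (simp add: kdelta_def powr_diff)
  moreover have "eval_fps (row_series m) (1 / y) = normc N a th0 thi r j m *
      ((if m = j then 1 else 1 / y) * hyp_pFq (upper m) (lower m) (1 / y))"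
    using radius by (simp add: row_series_def hyp_pFq_eq_eval_fps eval_fps_mult mult.assoc
        norm_less_fps_conv_radius_mult)
  ultimately show ?thesis
    by (simp add: PhiSol_def upper_def lower_def mult_ac)
qed

lemma has_field_derivative_PhiSol_row_series:
  fixes y :: complex and m :: nat
  assumes y: "y \<in> solDom"
  defines "G \<equiv> eval_fps (row_series m) (1 / y)"
    and "G' \<equiv> eval_fps (fps_deriv (row_series m)) (1 / y)"
    and "s \<equiv> - thi j" and "c \<equiv> - a / of_nat N"
  shows "((\<lambda>z. PhiSol N a th0 thi r z j m) has_field_derivative
    y powr s * (1 - 1 / y) powr c * ((s * G + c * G / (y - 1)) / y - G' / y\<^sup>2)) (at y)"
proof -
  have "norm y > 1" and y_slit: "y \<notin> \<real>\<^sub>\<le>\<^sub>0"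
    using y by (auto simp: solDom_def complex_nonpos_Reals_iff complex_is_Real_iff)
  then have "y \<noteq> 0" "y \<noteq> 1" by auto
  have x: "norm (1 / y) < 1"
    using \<open>norm y > 1\<close> by (simp add: norm_divide divide_less_eq)
  have x_slit: "1 - 1 / y \<notin> \<real>\<^sub>\<le>\<^sub>0"
  proof -
    have "Re (1 / y) \<le> norm (1 / y)" by (rule complex_Re_le_cmod)
    with x have "Re (1 - 1 / y) > 0" by simp
    then show ?thesis by (auto simp: complex_nonpos_Reals_iff)
  qed
  have "((\<lambda>z. 1 - 1 / z) has_field_derivative 1 / y\<^sup>2) (at y)"
    using \<open>y \<noteq> 0\<close> by (auto intro!: derivative_eq_intros simp: power2_eq_square field_simps)
  from DERIV_chain2[OF has_field_derivative_powr[OF x_slit] this]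
  have dE: "((\<lambda>z. (1 - 1 / z) powr c) has_field_derivative
      c * (1 - 1 / y) powr (c - 1) * (1 / y\<^sup>2)) (at y)"
    by (simp add: mult_ac)
  have "((\<lambda>z. 1 / z) has_field_derivative - 1 / y\<^sup>2) (at y)"
    using \<open>y \<noteq> 0\<close> by (auto intro!: derivative_eq_intros simp: power2_eq_square field_simps)
  from DERIV_chain2[OF has_field_derivative_eval_fps this]
  have dG: "((\<lambda>z. eval_fps (row_series m) (1 / z)) has_field_derivative G' * (- 1 / y\<^sup>2)) (at y)"
    using norm_less_fps_conv_radius_row_series[OF x] by (simp add: G'_def)
  have "((\<lambda>z. z powr s * (1 - 1 / z) powr c * eval_fps (row_series m) (1 / z)) has_field_derivative
      (s * y powr (s - 1) * (1 - 1 / y) powr c + c * (1 - 1 / y) powr (c - 1) * (1 / y\<^sup>2) * y powr s) * G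
      + G' * (- 1 / y\<^sup>2) * (y powr s * (1 - 1 / y) powr c)) (at y)"
    unfolding G_def by (rule DERIV_mult[OF DERIV_mult[OF has_field_derivative_powr[OF y_slit] dE] dG])
  moreover have "open {z :: complex. 1 < norm z}"
    by (rule open_Collect_less) (auto intro: continuous_intros)
  ultimately have "((\<lambda>z. PhiSol N a th0 thi r z j m) has_field_derivative
      (s * y powr (s - 1) * (1 - 1 / y) powr c + c * (1 - 1 / y) powr (c - 1) * (1 / y\<^sup>2) * y powr s) * G
      + G' * (- 1 / y\<^sup>2) * (y powr s * (1 - 1 / y) powr c)) (at y)"
    by (rule has_field_derivative_transform_within_open)
       (use \<open>norm y > 1\<close> PhiSol_eq_row_series in \<open>simp_all add: s_def c_def\<close>)
  moreover have "1 - 1 / y \<noteq> 0"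
    using x_slit by auto
  then have "(1 - 1 / y) powr (c - 1) = (1 - 1 / y) powr c / (1 - 1 / y)"
    by (simp add: powr_diff)
  moreover have "y powr (s - 1) = y powr s / y"
    using \<open>y \<noteq> 0\<close> by (simp add: powr_diff)
  moreover have "(s * (Y / y) * E + c * (E / (1 - 1 / y)) * (1 / y\<^sup>2) * Y) * G + G' * (- 1 / y\<^sup>2) * (Y * E)
      = Y * E * ((s * G + c * G / (y - 1)) / y - G' / y\<^sup>2)" for Y E
    using \<open>y \<noteq> 0\<close> \<open>y \<noteq> 1\<close> by (simp add: field_simps power2_eq_square)
  ultimately show ?thesis
    by simp
qed

lemma has_field_derivative_PhiSol:
  assumes y: "y \<in> solDom" and m: "m < N"
  shows "((\<lambda>z. PhiSol N a th0 thi r z j m) has_field_derivative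
    (\<Sum>k<N. PhiSol N a th0 thi r y j k *
      (matA0 N a th0 thi r k m / y + matA1 N a th0 thi r k m / (y - 1)))) (at y)"
proof -
  have "norm y > 1"
    using y by (simp add: solDom_def)
  then have "y \<noteq> 0" "y \<noteq> 1" "norm (1 / y) < 1"
    by (auto simp: norm_divide divide_less_eq)
  define G where "G k = eval_fps (row_series k) (1 / y)" for k
  define G' where "G' = eval_fps (fps_deriv (row_series m)) (1 / y)"
  define Y where "Y = y powr (- thi j)"
  define E where "E = (1 - 1 / y) powr (- a / of_nat N)"
  have "v m * (\<Sum>k<N. u k * G k) = y * (1 / y * v m * (\<Sum>k<N. u k * G k))"
    using \<open>y \<noteq> 0\<close> by simp
  also have "\<dots> = y * ((1 - 1 / y) * (1 / y * G' + d m * G m))"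
    using eval_row_series_ode[OF m \<open>norm (1 / y) < 1\<close>] by (simp add: G_def G'_def)
  also have "\<dots> = (y - 1) * (G' / y + d m * G m)"
    using \<open>y \<noteq> 0\<close> by (simp add: field_simps)
  finally have "v m * (\<Sum>k<N. u k * G k) = (y - 1) * (G' / y + d m * G m)" .
  then have sum_A1: "(\<Sum>k<N. G k * matA1 N a th0 thi r k m)
      = - ((y - 1) * (G' / y + d m * G m)) - a / of_nat N * G m"
    unfolding sum_mult_matA1[OF m] by simp
  have "PhiSol N a th0 thi r y j k = Y * E * G k" for k
    using PhiSol_eq_row_series[OF \<open>norm y > 1\<close>] by (simp add: G_def Y_def E_def)
  then have "(\<Sum>k<N. PhiSol N a th0 thi r y j k *
      (matA0 N a th0 thi r k m / y + matA1 N a th0 thi r k m / (y - 1)))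
      = Y * E * (\<Sum>k<N. G k * (matA0 N a th0 thi r k m / y + matA1 N a th0 thi r k m / (y - 1)))"
    by (simp add: sum_distrib_left mult.assoc)
  also have "\<dots> = Y * E * (- thi m * G m / y
      + (- ((y - 1) * (G' / y + d m * G m)) - a / of_nat N * G m) / (y * (y - 1)))"
    unfolding sum_mult_matA0_matA1[OF \<open>y \<noteq> 0\<close> \<open>y \<noteq> 1\<close> m] sum_A1 ..
  also have "\<dots> = Y * E * ((- thi j * G m + - a / of_nat N * G m / (y - 1)) / y - G' / y\<^sup>2)"
  proof -
    have "- thi m * g / y + (- ((y - 1) * (g' / y + (thi j - thi m) * g)) - p * g) / (y * (y - 1))
        = (- thi j * g + - p * g / (y - 1)) / y - g' / y\<^sup>2" for g g' p
      using \<open>y \<noteq> 0\<close> \<open>y \<noteq> 1\<close> by (simp add: field_simps power2_eq_square)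
    from this[of "G m" G' "a / of_nat N"] show ?thesis
      by (simp add: d_def)
  qed
  finally show ?thesis
    using has_field_derivative_PhiSol_row_series[OF y, of m]
    by (simp add: G_def G'_def Y_def E_def)
qed

lemma PhiSol_asymptotics:
  assumes m: "m < N"
  shows "\<exists>C R. \<forall>y\<in>solDom. norm y > R \<longrightarrow>
    norm (y powr (thi j) * PhiSol N a th0 thi r y j m - kdelta j m) \<le> C / norm y"
proof -
  define c where "c = - a / of_nat N"
  define phi where "phi x = (1 - x) powr c * eval_fps (row_series m) x" for x
  have "((\<lambda>x. 1 - x) has_field_derivative -1) (at 0)"
    by (auto intro!: derivative_eq_intros)
  from DERIV_chain2[OF has_field_derivative_powr this]
  have "((\<lambda>x. (1 - x) powr c) has_field_derivative c * (1 - 0) powr (c - 1) * -1) (at 0)"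
    by (simp add: complex_nonpos_Reals_iff)
  moreover have "(eval_fps (row_series m) has_field_derivative
      eval_fps (fps_deriv (row_series m)) 0) (at 0)"
    using norm_less_fps_conv_radius_row_series[of 0 m] by (intro has_field_derivative_eval_fps) simp
  ultimately obtain D where "(phi has_field_derivative D) (at 0)"
    unfolding phi_def using DERIV_mult by blast
  then obtain \<delta> where "\<delta> > 0" and bound: "\<And>x. norm x < \<delta> \<Longrightarrow> norm (phi x - phi 0) \<le> (norm D + 1) * norm x"
    by (rule has_field_derivative_imp_difference_bound) simp
  have "phi 0 = kdelta j m"
    using m by (simp add: phi_def eval_fps_at_0 row_series_nth kdelta_def)
  have "norm (y powr (thi j) * PhiSol N a th0 thi r y j m - kdelta j m) \<le> (norm D + 1) / norm y"
    if "norm y > max 1 (1 / \<delta>)" for y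
  proof -
    have "norm y > 1" "y \<noteq> 0"
      using that by auto
    have "norm (1 / y) < \<delta>"
      using that \<open>\<delta> > 0\<close> \<open>norm y > 1\<close> by (simp add: norm_divide divide_less_eq mult.commute)
    have "y powr (thi j) * y powr (- thi j) = 1"
      using \<open>y \<noteq> 0\<close> by (simp add: powr_def exp_add[symmetric])
    then have "y powr (thi j) * PhiSol N a th0 thi r y j m = phi (1 / y)"
      unfolding PhiSol_eq_row_series[OF \<open>norm y > 1\<close>] phi_def c_def
      by (metis (no_types, lifting) mult.assoc mult_1)
    then show ?thesis
      using bound[OF \<open>norm (1 / y) < \<delta>\<close>] \<open>phi 0 = kdelta j m\<close> by (simp add: norm_divide)
  qed
  then show ?thesis by blast
qed

end

theorem theorem2p5:
  fixes N :: nat and a :: complex and th0 thi r :: "nat \<Rightarrow> complex"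
  assumes "N \<ge> 2"
    and "(\<Sum>k<N. th0 k) = 0"
    and "(\<Sum>k<N. thi k) = 0"
    and "\<And>k l. k < N \<Longrightarrow> l < N \<Longrightarrow> k \<noteq> l \<Longrightarrow> thi k \<noteq> thi l"
    and "\<And>k l n. k < N \<Longrightarrow> l < N \<Longrightarrow> n \<noteq> 0 \<Longrightarrow> thi k - thi l \<noteq> of_int n"
    and "\<And>j. j < N \<Longrightarrow> r j \<noteq> 0"
  shows
    "(\<forall>y\<in>solDom. \<forall>j<N. \<forall>m<N.
        ((\<lambda>z. PhiSol N a th0 thi r z j m) has_field_derivative
           (\<Sum>k<N. PhiSol N a th0 thi r y j k *
               (matA0 N a th0 thi r k m / y + matA1 N a th0 thi r k m / (y - 1)))) (at y))
     \<and> (\<forall>j<N. \<forall>m<N. \<exists>C R. \<forall>y\<in>solDom. norm y > R \<longrightarrow>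
          norm (y powr (thi j) * PhiSol N a th0 thi r y j m - kdelta j m) \<le> C / norm y)"
proof -
  have row: "hypergeometric_row N thi r j" if "j < N" for j
    using that assms(4-6) by unfold_locales auto
  show ?thesis
    using hypergeometric_row.has_field_derivative_PhiSol[OF row]
      hypergeometric_row.PhiSol_asymptotics[OF row] by blast
qed

end
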